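(* Let $n=1$ and let $e^1,\dots,e^m$ be $C^\infty$ functions of $(x,w^{j'},w^{j'}_1,w^{j'}_2)$ (second-order data), defined on the whole corresponding Euclidean space. If there exists a Lagrange function $f$ of some finite order with $e^j=e^j[f]$ for all $j=1,\dots,m$, then each $e^j$ is affine in the second-order variables, $e^j=F^j-\sum_{j'}F^{jj'}w^{j'}_2$ with $F^j,F^{jj'}$ functions of $(x,w,w_1)$ and $F^{jj'}=F^{j'j}$, and there exists a first-order Lagrange function $g(x,w,w_1)$ with $e^j[g]=e^j$ for all $j$.
   Context: One independent variable $x$, dependent variables $w^1,\dots,w^m$; jet coordinates $w^j_r$ ($r\ge0$, $w^j_0=w^j$) standing for $d^rw^j/dx^r$. A Lagrange function is a $C^\infty$ function of $x$ and finitely many $w^j_r$, defined on the whole corresponding Euclidean space. $\frac{d}{dx}=\partial_x+\sum_{j,r}w^j_{r+1}\partial_{w^j_r}$ and $e^j[f]=\sum_r(-1)^r\frac{d^r}{dx^r}\frac{\partial f}{\partial w^j_r}$. *)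

theory Defs
  imports "HOL-Analysis.Analysis" "HOL-Library.Groups_Big_Fun"
begin

text \<open>Jet coordinates: the independent variable x and w^j_r (j-th dependent
variable, r-th derivative). Dependent variables are indexed j = 0..m-1.
A point of the (infinite) jet space is a map from coordinates to reals;
it carries the product topology.\<close>

datatype jvar = X | W nat nat

type_synonym jpt = "jvar \<Rightarrow> real"

definition pd :: "jvar \<Rightarrow> (jpt \<Rightarrow> real) \<Rightarrow> jpt \<Rightarrow> real" where
  "pd v F p = deriv (\<lambda>t. F (p(v := t))) (p v)"

definition iter_pd :: "jvar list \<Rightarrow> (jpt \<Rightarrow> real) \<Rightarrow> jpt \<Rightarrow> real" where
  "iter_pd vs F = foldr pd vs F"

definition depends_only :: "jvar set \<Rightarrow> (jpt \<Rightarrow> real) \<Rightarrow> bool" where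
  "depends_only S F \<longleftrightarrow> (\<forall>p q. (\<forall>v\<in>S. p v = q v) \<longrightarrow> F p = F q)"

definition smooth :: "(jpt \<Rightarrow> real) \<Rightarrow> bool" where
  "smooth F \<longleftrightarrow> (\<forall>vs. continuous_on UNIV (iter_pd vs F) \<and>
      (\<forall>v p. (\<lambda>t. iter_pd vs F (p(v := t))) differentiable (at (p v))))"

definition vars_upto :: "nat \<Rightarrow> nat \<Rightarrow> jvar set" where
  "vars_upto m k = insert X {W j r | j r. j < m \<and> r \<le> k}"

definition lagrange :: "nat \<Rightarrow> (jpt \<Rightarrow> real) \<Rightarrow> bool" where
  "lagrange m F \<longleftrightarrow> smooth F \<and> (\<exists>k. depends_only (vars_upto m k) F)"

text \<open>Total derivative d/dx = \<partial>_x + \<Sum>_{j,r} w^j_{r+1} \<partial>_{w^j_r}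
  (a finite sum for functions of finite order).\<close>
definition Dx :: "nat \<Rightarrow> (jpt \<Rightarrow> real) \<Rightarrow> jpt \<Rightarrow> real" where
  "Dx m F p = pd X F p +
     Sum_any (\<lambda>jr::nat\<times>nat. (if fst jr < m then p (W (fst jr) (Suc (snd jr))) * pd (W (fst jr) (snd jr)) F p else 0))"

definition euler :: "nat \<Rightarrow> nat \<Rightarrow> (jpt \<Rightarrow> real) \<Rightarrow> jpt \<Rightarrow> real" where
  "euler m j F p = Sum_any (\<lambda>r::nat. (-1) ^ r * (Dx m ^^ r) (pd (W j r) F) p)"

end

theory Submission
  imports Defs
begin

text \<open>Let \<open>f\<close> have order \<open>K \<ge> 2\<close> while its Euler--Lagrange expressions have order at
  most two. The coefficients of \<open>w\<^sub>2\<^sub>K\<close> and \<open>w\<^sub>2\<^sub>K\<^sub>-\<^sub>1\<close> in \<open>e\<^sup>j[f]\<close> must then vanish; this says that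
  the top-order momenta \<open>\<partial>f/\<partial>w\<^sup>j\<^sub>K\<close> have order \<open>K - 1\<close> and satisfy the integrability
  condition in the variables \<open>w\<^sub>K\<^sub>-\<^sub>1\<close>. A potential \<open>C\<close> of order \<open>K - 1\<close>, obtained by
  integrating along coordinates, yields \<open>f - D\<^sub>x C\<close>, which has order \<open>K - 1\<close> and the same
  Euler--Lagrange expressions because total derivatives are null Lagrangians. Descending
  to a first-order \<open>g\<close>, the expression \<open>\<partial>g/\<partial>w\<^sup>j - D\<^sub>x(\<partial>g/\<partial>w\<^sup>j\<^sub>1)\<close> is affine in \<open>w\<^sub>2\<close> with
  the symmetric coefficients \<open>\<partial>\<^sup>2g/\<partial>w\<^sup>i\<^sub>1\<partial>w\<^sup>j\<^sub>1\<close>.\<close>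

section \<open>Calculus on the jet space\<close>

lemma iter_pd_Nil [simp]: "iter_pd [] F = F"
  by (simp add: iter_pd_def)

lemma iter_pd_snoc: "iter_pd (vs @ [v]) F = iter_pd vs (pd v F)"
  by (simp add: iter_pd_def)

definition coordwise_C1 :: "(jpt \<Rightarrow> real) \<Rightarrow> bool" where
  "coordwise_C1 F \<longleftrightarrow> continuous_on UNIV F \<and> (\<forall>v p. (\<lambda>t. F (p(v := t))) differentiable (at (p v)))"

lemma smooth_iff_coordwise_C1: "smooth F \<longleftrightarrow> (\<forall>vs. coordwise_C1 (iter_pd vs F))"
  by (simp add: smooth_def coordwise_C1_def)

lemma smooth_pd: "smooth F \<Longrightarrow> smooth (pd v F)"
  unfolding smooth_iff_coordwise_C1 by (metis iter_pd_snoc)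

lemma smooth_imp_coordwise_C1: "smooth F \<Longrightarrow> coordwise_C1 F"
  unfolding smooth_iff_coordwise_C1 by (metis iter_pd_Nil)

lemma coordwise_C1_continuous: "coordwise_C1 F \<Longrightarrow> continuous_on UNIV F"
  by (simp add: coordwise_C1_def)

lemma smooth_continuous_pd: "smooth F \<Longrightarrow> continuous_on UNIV (pd v F)"
  by (intro coordwise_C1_continuous smooth_imp_coordwise_C1 smooth_pd)

lemma smooth_coinduct:
  assumes "\<And>H. H \<in> K \<Longrightarrow> coordwise_C1 H" "\<And>H v. H \<in> K \<Longrightarrow> pd v H \<in> K" "H \<in> K"
  shows "smooth H"
proof -
  have "\<forall>H\<in>K. coordwise_C1 (iter_pd vs H)" for vs
    by (induction vs rule: rev_induct) (use assms(1,2) in \<open>simp_all add: iter_pd_snoc\<close>)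
  then show ?thesis using assms(3) smooth_iff_coordwise_C1 by blast
qed

lemma coordwise_C1_has_derivative:
  assumes "coordwise_C1 F"
  shows "((\<lambda>t. F (p(v := t))) has_real_derivative pd v F (p(v := x))) (at x)"
proof -
  have "(\<lambda>t. F ((p(v := x))(v := t))) differentiable (at ((p(v := x)) v))"
    using assms coordwise_C1_def by blast
  then show ?thesis by (simp add: pd_def DERIV_deriv_iff_real_differentiable)
qed

lemma coordwise_C1_has_derivative_at:
  "coordwise_C1 F \<Longrightarrow> ((\<lambda>t. F (p(v := t))) has_real_derivative pd v F p) (at (p v))"
  using coordwise_C1_has_derivative[of F p v "p v"] by simp

lemma pd_eqI:
  assumes "\<And>p. ((\<lambda>t. F (p(v := t))) has_real_derivative D p) (at (p v))"
  shows "pd v F = D"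
  using assms by (auto simp: pd_def fun_eq_iff intro: DERIV_imp_deriv)

lemma coordwise_C1I:
  assumes "continuous_on UNIV F"
    and "\<And>v p. ((\<lambda>t. F (p(v := t))) has_real_derivative D v p) (at (p v))"
  shows "coordwise_C1 F"
  using assms unfolding coordwise_C1_def by (meson real_differentiable_def)

lemma continuous_on_fun_upd [continuous_intros]:
  fixes f :: "'a::topological_space \<Rightarrow> jpt"
  assumes "continuous_on S f" "continuous_on S g"
  shows "continuous_on S (\<lambda>z. (f z)(v := g z))"
proof (rule continuous_on_coordinatewise_then_product)
  fix i show "continuous_on S (\<lambda>z. ((f z)(v := g z)) i)"
    using assms continuous_on_product_then_coordinatewise[OF assms(1)] by (cases "i = v") auto
qed

lemma continuous_on_line:
  "continuous_on UNIV \<Psi> \<Longrightarrow> continuous_on UNIV (\<lambda>s. \<Psi> ((p::jpt)(v := s)))"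
  by (rule continuous_on_compose2[OF _ continuous_on_fun_upd[OF continuous_on_const continuous_on_id]]) auto

lemma pd_const [simp]: "pd v (\<lambda>p. c) = (\<lambda>p. 0)"
  by (rule pd_eqI) simp

lemma smooth_const [simp]: "smooth (\<lambda>p. c)"
  by (rule smooth_coinduct[where K="range (\<lambda>c. \<lambda>p::jpt. c)"])
     (auto intro: coordwise_C1I[where D="\<lambda>v p. 0"])

lemma coord_has_derivative: "((\<lambda>t. (p(v := t)) w) has_real_derivative (if v = w then 1 else 0)) (at x)"
  by (cases "v = w") auto

lemma pd_coord: "pd v (\<lambda>p::jpt. p w) = (\<lambda>p. if v = w then 1 else 0)"
  by (rule pd_eqI) (rule coord_has_derivative)

lemma smooth_coord [simp]: "smooth (\<lambda>p::jpt. p w)"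
proof (rule smooth_coinduct[where K="insert (\<lambda>p. p w) (range (\<lambda>c. \<lambda>p::jpt. c))"])
  fix H assume "H \<in> insert (\<lambda>p. p w) (range (\<lambda>c. \<lambda>p::jpt. c))"
  then show "coordwise_C1 H"
    by (auto intro: coordwise_C1I[where D="\<lambda>v p. if v = w then 1 else 0"] coord_has_derivative
                    coordwise_C1I[where D="\<lambda>v p. 0"])
qed (auto simp: pd_coord)

text \<open>Smoothness of a product is shown by coinduction over the class of finite sums of
  products of smooth functions, which the product rule keeps closed under partial derivatives.\<close>

definition sum_products :: "((jpt \<Rightarrow> real) \<times> (jpt \<Rightarrow> real)) list \<Rightarrow> jpt \<Rightarrow> real" where
  "sum_products xs p = (\<Sum>(F, G)\<leftarrow>xs. F p * G p)"

definition pd_products ::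
    "jvar \<Rightarrow> ((jpt \<Rightarrow> real) \<times> (jpt \<Rightarrow> real)) list \<Rightarrow> ((jpt \<Rightarrow> real) \<times> (jpt \<Rightarrow> real)) list" where
  "pd_products v xs = concat (map (\<lambda>(F, G). [(pd v F, G), (F, pd v G)]) xs)"

lemma sum_products_simps [simp]:
  "sum_products [] p = 0"
  "sum_products ((F, G) # xs) p = F p * G p + sum_products xs p"
  by (simp_all add: sum_products_def)

lemma pd_products_simps [simp]:
  "pd_products v [] = []"
  "pd_products v ((F, G) # xs) = (pd v F, G) # (F, pd v G) # pd_products v xs"
  by (simp_all add: pd_products_def)

lemma sum_products_has_derivative:
  assumes "\<forall>(F, G)\<in>set xs. coordwise_C1 F \<and> coordwise_C1 G"
  shows "((\<lambda>t. sum_products xs (p(v := t))) has_real_derivative sum_products (pd_products v xs) p) (at (p v))"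
  using assms
proof (induction xs)
  case (Cons FG xs)
  obtain F G where FG: "FG = (F, G)" by fastforce
  have "((\<lambda>t. F (p(v := t)) * G (p(v := t))) has_real_derivative
      pd v F p * G (p(v := p v)) + pd v G p * F (p(v := p v))) (at (p v))"
    by (intro DERIV_mult coordwise_C1_has_derivative_at) (use Cons.prems FG in auto)
  then have "((\<lambda>t. F (p(v := t)) * G (p(v := t))) has_real_derivative pd v F p * G p + F p * pd v G p) (at (p v))"
    by (simp add: mult.commute)
  moreover have "((\<lambda>t. sum_products xs (p(v := t))) has_real_derivative sum_products (pd_products v xs) p) (at (p v))"
    using Cons.prems by (intro Cons.IH) (simp add: FG)
  ultimately show ?case
    unfolding FG sum_products_simps pd_products_simps add.assoc[symmetric] by (rule DERIV_add)
qed simp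

lemma continuous_on_sum_products:
  "\<forall>(F, G)\<in>set xs. continuous_on UNIV F \<and> continuous_on UNIV G \<Longrightarrow> continuous_on UNIV (sum_products xs)"
  by (induction xs) (auto intro!: continuous_intros)

lemma smooth_sum_products:
  assumes "\<forall>(F, G)\<in>set xs. smooth F \<and> smooth G"
  shows "smooth (sum_products xs)"
proof (rule smooth_coinduct[where K="{sum_products xs | xs. \<forall>(F, G)\<in>set xs. smooth F \<and> smooth G}"])
  fix H assume "H \<in> {sum_products xs | xs. \<forall>(F, G)\<in>set xs. smooth F \<and> smooth G}"
  then obtain xs where xs: "\<forall>(F, G)\<in>set xs. smooth F \<and> smooth G" and H: "H = sum_products xs"
    by blast
  have "\<forall>(F, G)\<in>set xs. coordwise_C1 F \<and> coordwise_C1 G"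
    using xs smooth_imp_coordwise_C1 by blast
  then show "coordwise_C1 H"
    unfolding H
    by (intro coordwise_C1I[where D="\<lambda>v. sum_products (pd_products v xs)"]
          continuous_on_sum_products sum_products_has_derivative)
       (auto simp: coordwise_C1_continuous)
next
  fix H v assume "H \<in> {sum_products xs | xs. \<forall>(F, G)\<in>set xs. smooth F \<and> smooth G}"
  then obtain xs where xs: "\<forall>(F, G)\<in>set xs. smooth F \<and> smooth G" and H: "H = sum_products xs"
    by blast
  have "pd v H = sum_products (pd_products v xs)"
    unfolding H using xs
    by (intro pd_eqI sum_products_has_derivative) (auto simp: smooth_imp_coordwise_C1)
  moreover have "\<forall>(F, G)\<in>set (pd_products v xs). smooth F \<and> smooth G"
    using xs by (induction xs) (auto simp: smooth_pd)
  ultimately show "pd v H \<in> {sum_products xs | xs. \<forall>(F, G)\<in>set xs. smooth F \<and> smooth G}"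
    by blast
qed (use assms in blast)

lemma smooth_mult:
  assumes "smooth F" "smooth G" shows "smooth (\<lambda>p. F p * G p)"
proof -
  have "(\<lambda>p. F p * G p) = sum_products [(F, G)]" by (simp add: fun_eq_iff)
  then show ?thesis using assms by (simp add: smooth_sum_products)
qed

lemma smooth_add:
  assumes "smooth F" "smooth G" shows "smooth (\<lambda>p. F p + G p)"
proof -
  have "(\<lambda>p. F p + G p) = sum_products [(F, \<lambda>p. 1), (G, \<lambda>p. 1)]" by (simp add: fun_eq_iff)
  then show ?thesis using assms by (simp add: smooth_sum_products)
qed

lemma smooth_scale: "smooth F \<Longrightarrow> smooth (\<lambda>p. c * F p)"
  by (rule smooth_mult[OF smooth_const])

lemma smooth_diff: "smooth F \<Longrightarrow> smooth G \<Longrightarrow> smooth (\<lambda>p. F p - G p)"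
  using smooth_add[OF _ smooth_scale[of G "-1"], of F] by simp

lemma smooth_sum: "(\<And>i. i \<in> A \<Longrightarrow> smooth (F i)) \<Longrightarrow> smooth (\<lambda>p. \<Sum>i\<in>A. F i p)"
proof (induction A rule: infinite_finite_induct)
  case (insert x A)
  then show ?case using smooth_add[of "F x" "\<lambda>p. \<Sum>i\<in>A. F i p"] by simp
qed auto

lemma pd_add: "coordwise_C1 F \<Longrightarrow> coordwise_C1 G \<Longrightarrow> pd v (\<lambda>p. F p + G p) = (\<lambda>p. pd v F p + pd v G p)"
  by (rule pd_eqI) (auto intro!: DERIV_add coordwise_C1_has_derivative_at)

lemma pd_diff: "coordwise_C1 F \<Longrightarrow> coordwise_C1 G \<Longrightarrow> pd v (\<lambda>p. F p - G p) = (\<lambda>p. pd v F p - pd v G p)"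
  by (rule pd_eqI) (auto intro!: DERIV_diff coordwise_C1_has_derivative_at)

lemma pd_mult:
  "coordwise_C1 F \<Longrightarrow> coordwise_C1 G \<Longrightarrow> pd v (\<lambda>p. F p * G p) = (\<lambda>p. pd v F p * G p + F p * pd v G p)"
  using sum_products_has_derivative[of "[(F, G)]"] by (intro pd_eqI) simp

lemma pd_scale: "coordwise_C1 F \<Longrightarrow> pd v (\<lambda>p. c * F p) = (\<lambda>p. c * pd v F p)"
  by (rule pd_eqI) (auto intro!: DERIV_cmult coordwise_C1_has_derivative_at)

lemma pd_sum:
  "finite A \<Longrightarrow> (\<And>i. i \<in> A \<Longrightarrow> coordwise_C1 (F i)) \<Longrightarrow> pd v (\<lambda>p. \<Sum>i\<in>A. F i p) = (\<lambda>p. \<Sum>i\<in>A. pd v (F i) p)"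
  by (rule pd_eqI) (auto intro!: DERIV_sum coordwise_C1_has_derivative_at)

section \<open>Dependence on finitely many coordinates\<close>

lemma depends_onlyD: "depends_only S F \<Longrightarrow> \<forall>w\<in>S. p w = q w \<Longrightarrow> F p = F q"
  unfolding depends_only_def by blast

lemma depends_only_mono: "depends_only S F \<Longrightarrow> S \<subseteq> T \<Longrightarrow> depends_only T F"
  unfolding depends_only_def by blast

lemma depends_only_const: "depends_only S (\<lambda>p. c)"
  unfolding depends_only_def by blast

lemma depends_only_coord: "v \<in> S \<Longrightarrow> depends_only S (\<lambda>p. p v)"
  unfolding depends_only_def by blast

lemma depends_only_comp2:
  assumes "depends_only S F" "depends_only S G"
  shows "depends_only S (\<lambda>p. h (F p) (G p))"
proof (unfold depends_only_def, intro allI impI)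
  fix p q :: jpt assume pq: "\<forall>v\<in>S. p v = q v"
  show "h (F p) (G p) = h (F q) (G q)"
    using depends_onlyD[OF assms(1) pq] depends_onlyD[OF assms(2) pq] by simp
qed

lemma depends_only_sum:
  assumes "\<And>i. i \<in> A \<Longrightarrow> depends_only S (F i)"
  shows "depends_only S (\<lambda>p. \<Sum>i\<in>A. F i p)"
proof (unfold depends_only_def, intro allI impI)
  fix p q :: jpt assume "\<forall>v\<in>S. p v = q v"
  then show "(\<Sum>i\<in>A. F i p) = (\<Sum>i\<in>A. F i q)"
    by (intro sum.cong refl depends_onlyD[OF assms])
qed

lemma pd_eq_0_if_independent:
  assumes "depends_only S F" "v \<notin> S"
  shows "pd v F = (\<lambda>p. 0)"
proof (rule pd_eqI)
  fix p
  have "(\<lambda>t. F (p(v := t))) = (\<lambda>t. F p)"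
  proof
    fix t show "F (p(v := t)) = F p"
      by (rule depends_onlyD[OF assms(1)]) (use assms(2) in auto)
  qed
  then show "((\<lambda>t. F (p(v := t))) has_real_derivative 0) (at (p v))" by simp
qed

lemma depends_only_pd:
  assumes "depends_only S F"
  shows "depends_only S (pd v F)"
proof (cases "v \<in> S")
  case True
  show ?thesis unfolding depends_only_def
  proof (intro allI impI)
    fix p q :: jpt assume pq: "\<forall>w\<in>S. p w = q w"
    have "(\<lambda>t. F (p(v := t))) = (\<lambda>t. F (q(v := t)))"
    proof
      fix t show "F (p(v := t)) = F (q(v := t))"
        by (rule depends_onlyD[OF assms]) (use pq in auto)
    qed
    moreover have "p v = q v" using pq True by blast
    ultimately show "pd v F p = pd v F q" by (simp add: pd_def)
  qed
next
  case False
  then show ?thesis using pd_eq_0_if_independent[OF assms] depends_only_const by metis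
qed

lemma depends_only_Diff_if_pd_eq_0:
  assumes "depends_only S F" "coordwise_C1 F" "pd v F = (\<lambda>p. 0)"
  shows "depends_only (S - {v}) F"
  unfolding depends_only_def
proof (intro allI impI)
  fix p q :: jpt assume pq: "\<forall>w\<in>S - {v}. p w = q w"
  have "\<forall>x. ((\<lambda>t. F (p(v := t))) has_real_derivative 0) (at x)"
    using coordwise_C1_has_derivative[OF assms(2), of p v] assms(3) by simp
  then have "F (p(v := p v)) = F (p(v := q v))" by (rule DERIV_isconst_all)
  also have "F (p(v := q v)) = F q"
    using pq by (intro depends_onlyD[OF assms(1)]) auto
  finally show "F p = F q" by simp
qed

lemma depends_only_Diff_if_pd_eq_0_finite:
  assumes "finite T" "depends_only S F" "coordwise_C1 F" "\<forall>v\<in>T. pd v F = (\<lambda>p. 0)"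
  shows "depends_only (S - T) F"
  using assms(1,4)
proof (induction T rule: finite_induct)
  case (insert v T)
  have "S - insert v T = (S - T) - {v}" by blast
  then show ?case
    using depends_only_Diff_if_pd_eq_0[OF _ assms(3), of "S - T" v] insert by simp
qed (use assms(2) in simp)

lemma vars_upto_W [simp]: "W j r \<in> vars_upto m k \<longleftrightarrow> j < m \<and> r \<le> k"
  by (auto simp: vars_upto_def)

lemma vars_upto_mono: "k \<le> k' \<Longrightarrow> vars_upto m k \<subseteq> vars_upto m k'"
  by (auto simp: vars_upto_def)

section \<open>Primitives along a coordinate and symmetry of second derivatives\<close>

definition primitive :: "(real \<Rightarrow> real) \<Rightarrow> real \<Rightarrow> real" where
  "primitive \<psi> y = integral {0..y} \<psi> - integral {y..0} \<psi>"

lemma primitive_0 [simp]: "primitive \<psi> 0 = 0"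
  by (simp add: primitive_def)

lemma primitive_eq_integral_diff:
  assumes c: "continuous_on UNIV \<psi>" and a: "a \<le> 0" "a \<le> y"
  shows "primitive \<psi> y = integral {a..y} \<psi> - integral {a..0} \<psi>"
proof (cases "0 \<le> y")
  case True
  have "integral {a..0} \<psi> + integral {0..y} \<psi> = integral {a..y} \<psi>"
    by (rule Henstock_Kurzweil_Integration.integral_combine)
       (use a True in \<open>auto intro!: integrable_continuous_real continuous_on_subset[OF c]\<close>)
  moreover have "integral {y..0} \<psi> = 0"
    using True by (cases "y = 0") auto
  ultimately show ?thesis unfolding primitive_def by simp
next
  case False
  have "integral {a..y} \<psi> + integral {y..0} \<psi> = integral {a..0} \<psi>"
    by (rule Henstock_Kurzweil_Integration.integral_combine)
       (use a False in \<open>auto intro!: integrable_continuous_real continuous_on_subset[OF c]\<close>)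
  then show ?thesis using False unfolding primitive_def by simp
qed

lemma primitive_has_derivative:
  assumes c: "continuous_on UNIV \<psi>"
  shows "(primitive \<psi> has_real_derivative \<psi> y) (at y)"
proof -
  define a where "a = min 0 y - 1"
  define b where "b = max 0 y + 1"
  have "((\<lambda>z. integral {a..z} \<psi>) has_real_derivative \<psi> y) (at y within {a..b})"
    by (rule integral_has_real_derivative) (auto simp: a_def b_def intro: continuous_on_subset[OF c])
  then have "((\<lambda>z. integral {a..z} \<psi>) has_real_derivative \<psi> y) (at y)"
    by (simp add: at_within_Icc_at a_def b_def)
  then have "((\<lambda>z. integral {a..z} \<psi> - integral {a..0} \<psi>) has_real_derivative \<psi> y - 0) (at y)"
    by (intro DERIV_diff) auto
  then have "((\<lambda>z. integral {a..z} \<psi> - integral {a..0} \<psi>) has_real_derivative \<psi> y) (at y)"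
    by simp
  then show ?thesis
  proof (rule has_field_derivative_transform_within_open[where S="{a<..}"])
    fix x assume "x \<in> {a<..}"
    then show "integral {a..x} \<psi> - integral {a..0} \<psi> = primitive \<psi> x"
      using primitive_eq_integral_diff[OF c, of a x] by (simp add: a_def)
  qed (auto simp: a_def)
qed

lemma primitive_eq_integral_01:
  assumes c: "continuous_on UNIV \<psi>"
  shows "primitive \<psi> y = integral {0..1} (\<lambda>t. y * \<psi> (t * y))"
proof -
  have bound: "-\<bar>y\<bar> \<le> t * y \<and> t * y \<le> \<bar>y\<bar>" if "0 \<le> t" "t \<le> 1" for t
  proof -
    have "\<bar>t * y\<bar> \<le> \<bar>y\<bar>" using that by (simp add: abs_mult mult_left_le_one_le)
    then show ?thesis by (simp add: abs_le_iff)
  qed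
  have "((\<lambda>t. y *\<^sub>R \<psi> (t * y)) has_integral
        (integral {0 * y..1 * y} \<psi> - integral {1 * y..0 * y} \<psi>)) {0..1}"
    by (rule has_integral_substitution_general[where s="{}" and c="-\<bar>y\<bar>" and d="\<bar>y\<bar>"])
       (auto intro!: derivative_eq_intros continuous_on_subset[OF c] continuous_intros dest: bound)
  then have "((\<lambda>t. y * \<psi> (t * y)) has_integral primitive \<psi> y) {0..1}"
    by (simp add: primitive_def)
  then show ?thesis by (rule integral_unique[symmetric])
qed

definition coord_primitive :: "jvar \<Rightarrow> (jpt \<Rightarrow> real) \<Rightarrow> jpt \<Rightarrow> real" where
  "coord_primitive v \<Psi> p = primitive (\<lambda>s. \<Psi> (p(v := s))) (p v)"

lemma coord_primitive_has_derivative_same: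
  assumes "continuous_on UNIV \<Psi>"
  shows "((\<lambda>t. coord_primitive v \<Psi> (p(v := t))) has_real_derivative \<Psi> p) (at (p v))"
proof -
  have "(\<lambda>t. coord_primitive v \<Psi> (p(v := t))) = primitive (\<lambda>s. \<Psi> (p(v := s)))"
    by (simp add: coord_primitive_def fun_eq_iff)
  then show ?thesis
    using primitive_has_derivative[OF continuous_on_line[OF assms], of p v "p v"] by simp
qed

lemma continuous_on_coord_primitive:
  assumes c: "continuous_on UNIV \<Psi>"
  shows "continuous_on UNIV (coord_primitive v \<Psi>)"
proof -
  have eq: "coord_primitive v \<Psi> = (\<lambda>p. integral (cbox 0 1) (\<lambda>t. p v * \<Psi> (p(v := t * p v))))"
    by (simp add: fun_eq_iff coord_primitive_def primitive_eq_integral_01[OF continuous_on_line[OF c]])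
  have fst_coord: "continuous_on UNIV (\<lambda>z::jpt \<times> real. fst z i)" for i
    by (rule continuous_on_product_then_coordinatewise[OF continuous_on_fst[OF continuous_on_id]])
  have "continuous_on UNIV (\<lambda>z::jpt \<times> real. (fst z)(v := snd z * fst z v))"
    by (intro continuous_on_fun_upd continuous_on_mult continuous_on_fst continuous_on_snd
          continuous_on_id fst_coord)
  then have "continuous_on UNIV (\<lambda>z::jpt \<times> real. fst z v * \<Psi> ((fst z)(v := snd z * fst z v)))"
    by (intro continuous_on_mult fst_coord continuous_on_compose2[OF c]) auto
  then have "continuous_on (UNIV \<times> cbox 0 1) (\<lambda>(x::jpt, t::real). x v * \<Psi> (x(v := t * x v)))"
    by (auto simp: case_prod_beta intro: continuous_on_subset)
  from integral_continuous_on_param[OF this] show ?thesis unfolding eq .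
qed

lemma coord_primitive_has_derivative_other:
  assumes C: "coordwise_C1 \<Psi>" and cu: "continuous_on UNIV (pd u \<Psi>)" and uv: "u \<noteq> v"
  shows "((\<lambda>x. coord_primitive v \<Psi> (p(u := x))) has_real_derivative coord_primitive v (pd u \<Psi>) p) (at (p u))"
proof -
  define f where "f = (\<lambda>x s. \<Psi> (p(u := x, v := s)))"
  define fx where "fx = (\<lambda>x s. pd u \<Psi> (p(u := x, v := s)))"
  have cfx: "continuous_on (UNIV \<times> cbox a b) (\<lambda>(x, t). fx x t)" for a b
  proof -
    have "continuous_on UNIV (\<lambda>z::real \<times> real. pd u \<Psi> (p(u := fst z, v := snd z)))"
      by (rule continuous_on_compose2[OF cu])
         (auto intro!: continuous_on_fun_upd continuous_on_fst continuous_on_snd continuous_on_id)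
    then show ?thesis by (auto simp: fx_def case_prod_beta intro: continuous_on_subset)
  qed
  have der: "((\<lambda>x. f x t) has_field_derivative fx x t) (at x within UNIV)" for x t
    using coordwise_C1_has_derivative[OF C, of "p(v := t)" u x] uv
    by (simp add: f_def fx_def fun_upd_twist)
  have int: "f x integrable_on cbox a b" for x a b
  proof -
    have "continuous_on UNIV (f x)"
      using continuous_on_line[OF coordwise_C1_continuous[OF C], of "p(u := x)" v] by (simp add: f_def)
    then show ?thesis by (simp add: integrable_continuous_real continuous_on_subset)
  qed
  have L: "((\<lambda>x. integral (cbox a b) (f x)) has_field_derivative integral (cbox a b) (fx (p u))) (at (p u))"
    for a b
    using leibniz_rule_field_derivative[OF der int cfx, of "p u" a b] by simp
  have eq: "(\<lambda>x. coord_primitive v \<Psi> (p(u := x)))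
      = (\<lambda>x. integral (cbox 0 (p v)) (f x) - integral (cbox (p v) 0) (f x))"
    using uv by (simp add: fun_eq_iff coord_primitive_def primitive_def f_def)
  have "coord_primitive v (pd u \<Psi>) p
      = integral (cbox 0 (p v)) (fx (p u)) - integral (cbox (p v) 0) (fx (p u))"
    by (simp add: coord_primitive_def primitive_def fx_def)
  then show ?thesis unfolding eq by (simp only:) (intro DERIV_diff L)
qed

lemma coord_primitive_has_derivative:
  assumes "smooth \<Psi>"
  shows "((\<lambda>t. coord_primitive v \<Psi> (p(u := t))) has_real_derivative
      (if u = v then \<Psi> p else coord_primitive v (pd u \<Psi>) p)) (at (p u))"
proof (cases "u = v")
  case True
  then show ?thesis
    using coord_primitive_has_derivative_same[OF coordwise_C1_continuous[OF smooth_imp_coordwise_C1[OF assms]]]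
    by simp
next
  case False
  then show ?thesis
    using coord_primitive_has_derivative_other[OF smooth_imp_coordwise_C1[OF assms] smooth_continuous_pd[OF assms] False]
    by simp
qed

lemma pd_coord_primitive:
  assumes "smooth \<Psi>"
  shows "pd u (coord_primitive v \<Psi>) = (if u = v then \<Psi> else coord_primitive v (pd u \<Psi>))"
proof -
  have "pd u (coord_primitive v \<Psi>) = (\<lambda>p. if u = v then \<Psi> p else coord_primitive v (pd u \<Psi>) p)"
    by (rule pd_eqI) (rule coord_primitive_has_derivative[OF assms])
  then show ?thesis by auto
qed

lemma depends_only_coord_primitive:
  assumes "depends_only S \<Psi>" "v \<in> S"
  shows "depends_only S (coord_primitive v \<Psi>)"
  unfolding depends_only_def
proof (intro allI impI)
  fix p q :: jpt assume pq: "\<forall>w\<in>S. p w = q w"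
  have "(\<lambda>s. \<Psi> (p(v := s))) = (\<lambda>s. \<Psi> (q(v := s)))"
  proof
    fix s show "\<Psi> (p(v := s)) = \<Psi> (q(v := s))"
      by (rule depends_onlyD[OF assms(1)]) (use pq in auto)
  qed
  moreover have "p v = q v" using pq assms(2) by blast
  ultimately show "coord_primitive v \<Psi> p = coord_primitive v \<Psi> q"
    by (simp add: coord_primitive_def)
qed

lemma coord_primitive_0 [simp]: "coord_primitive v (\<lambda>p. 0) = (\<lambda>p. 0)"
  by (simp add: coord_primitive_def primitive_def fun_eq_iff)

lemma smooth_coord_primitive:
  assumes "smooth \<Psi>"
  shows "smooth (coord_primitive v \<Psi>)"
proof (rule smooth_coinduct[where K="{coord_primitive v G | G. smooth G} \<union> Collect smooth"])
  fix H assume "H \<in> {coord_primitive v G | G. smooth G} \<union> Collect smooth"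
  then show "coordwise_C1 H"
  proof
    assume "H \<in> {coord_primitive v G | G. smooth G}"
    then obtain G where G: "smooth G" "H = coord_primitive v G" by blast
    show "coordwise_C1 H"
      unfolding G(2)
    proof (rule coordwise_C1I)
      show "continuous_on UNIV (coord_primitive v G)"
        using G(1) by (intro continuous_on_coord_primitive coordwise_C1_continuous smooth_imp_coordwise_C1)
    qed (rule coord_primitive_has_derivative[OF G(1)])
  qed (auto intro: smooth_imp_coordwise_C1)
next
  fix H u assume "H \<in> {coord_primitive v G | G. smooth G} \<union> Collect smooth"
  then show "pd u H \<in> {coord_primitive v G | G. smooth G} \<union> Collect smooth"
  proof
    assume "H \<in> {coord_primitive v G | G. smooth G}"
    then obtain G where "smooth G" "H = coord_primitive v G" by blast
    then show ?thesis by (auto simp: pd_coord_primitive smooth_pd)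
  qed (simp add: smooth_pd)
qed (use assms in blast)

lemma freeze_has_derivative:
  assumes "coordwise_C1 G"
  shows "((\<lambda>t. G ((p(u := t))(v := c))) has_real_derivative (if u = v then 0 else pd u G (p(v := c)))) (at (p u))"
proof (cases "u = v")
  case False
  have "((\<lambda>t. G ((p(v := c))(u := t))) has_real_derivative pd u G ((p(v := c))(u := p u))) (at (p u))"
    by (rule coordwise_C1_has_derivative[OF assms])
  moreover have "(p(v := c))(u := p u) = p(v := c)"
    using False by (simp add: fun_eq_iff)
  ultimately show ?thesis using False by (simp add: fun_upd_twist)
qed simp

lemma pd_freeze:
  assumes "coordwise_C1 G"
  shows "pd u (\<lambda>p. G (p(v := c))) = (if u = v then (\<lambda>p. 0) else (\<lambda>p. pd u G (p(v := c))))"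
proof -
  have "pd u (\<lambda>p. G (p(v := c))) = (\<lambda>p. if u = v then 0 else pd u G (p(v := c)))"
    by (rule pd_eqI) (rule freeze_has_derivative[OF assms])
  then show ?thesis by auto
qed

lemma smooth_freeze:
  assumes "smooth G"
  shows "smooth (\<lambda>p. G (p(v := c)))"
proof (rule smooth_coinduct[where K="{\<lambda>p. G (p(v := c)) | G. smooth G}"])
  fix H assume "H \<in> {\<lambda>p. G (p(v := c)) | G. smooth G}"
  then obtain G where G: "smooth G" "H = (\<lambda>p. G (p(v := c)))" by blast
  have "continuous_on UNIV (\<lambda>p. G (p(v := c)))"
    by (rule continuous_on_compose2[OF _ continuous_on_fun_upd[OF continuous_on_id continuous_on_const]])
       (use G(1) in \<open>auto intro: coordwise_C1_continuous smooth_imp_coordwise_C1\<close>)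
  then show "coordwise_C1 H"
    unfolding G(2) using freeze_has_derivative[OF smooth_imp_coordwise_C1[OF G(1)]]
    by (rule coordwise_C1I)
next
  fix H u assume "H \<in> {\<lambda>p. G (p(v := c)) | G. smooth G}"
  then obtain G where G: "smooth G" "H = (\<lambda>p. G (p(v := c)))" by blast
  have "(\<lambda>p::jpt. 0::real) = (\<lambda>p. (\<lambda>q::jpt. 0::real) (p(v := c)))" by simp
  then show "pd u H \<in> {\<lambda>p. G (p(v := c)) | G. smooth G}"
    unfolding G(2) pd_freeze[OF smooth_imp_coordwise_C1[OF G(1)]]
    using G(1) smooth_pd smooth_const by (cases "u = v") auto
qed (use assms in blast)

lemma eq_freeze_plus_coord_primitive:
  assumes C: "coordwise_C1 F" and c: "continuous_on UNIV (pd v F)"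
  shows "F p = F (p(v := 0)) + coord_primitive v (pd v F) p"
proof -
  define \<phi> where "\<phi> = (\<lambda>t. F (p(v := t)) - F (p(v := 0)) - primitive (\<lambda>s. pd v F (p(v := s))) t)"
  have "(\<phi> has_real_derivative 0) (at x)" for x
  proof -
    have "(\<phi> has_real_derivative pd v F (p(v := x)) - 0 - pd v F (p(v := x))) (at x)"
      unfolding \<phi>_def
      by (intro DERIV_diff coordwise_C1_has_derivative[OF C] DERIV_const primitive_has_derivative
            continuous_on_line c)
    then show ?thesis by simp
  qed
  then have "\<phi> (p v) = \<phi> 0" by (intro DERIV_isconst_all) blast
  then show ?thesis by (simp add: \<phi>_def coord_primitive_def)
qed

text \<open>Schwarz: writing \<open>F\<close> as its value on the hyperplane \<open>w_v = 0\<close> plus the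
  \<open>v\<close>-primitive of \<open>\<partial>\<^sub>v F\<close>, both orders of differentiation can be computed explicitly.\<close>

lemma pd_commute:
  assumes "smooth F"
  shows "pd u (pd v F) = pd v (pd u F)"
proof (cases "u = v")
  case False
  have sF: "smooth (pd v F)" "smooth (pd u F)" "smooth (pd u (pd v F))"
    using assms smooth_pd by blast+
  have cF: "coordwise_C1 F" "coordwise_C1 (pd v F)" "coordwise_C1 (pd u F)"
    using sF assms smooth_imp_coordwise_C1 by blast+
  have eqF: "F = (\<lambda>p. F (p(v := 0)) + coord_primitive v (pd v F) p)"
    using eq_freeze_plus_coord_primitive[OF cF(1) smooth_continuous_pd[OF assms]] by blast
  have "pd u F = (\<lambda>p. pd u (\<lambda>p. F (p(v := 0))) p + pd u (coord_primitive v (pd v F)) p)"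
    by (subst eqF, rule pd_add)
       (auto intro: smooth_imp_coordwise_C1 smooth_freeze smooth_coord_primitive assms sF)
  also have "\<dots> = (\<lambda>p. pd u F (p(v := 0)) + coord_primitive v (pd u (pd v F)) p)"
    using False by (simp add: pd_freeze[OF cF(1)] pd_coord_primitive[OF sF(1)])
  finally have eq_pd: "pd u F = (\<lambda>p. pd u F (p(v := 0)) + coord_primitive v (pd u (pd v F)) p)" .
  have "pd v (pd u F) = (\<lambda>p. pd v (\<lambda>p. pd u F (p(v := 0))) p + pd v (coord_primitive v (pd u (pd v F))) p)"
    by (subst eq_pd, rule pd_add)
       (auto intro: smooth_imp_coordwise_C1 smooth_freeze smooth_coord_primitive sF)
  also have "\<dots> = pd u (pd v F)"
    by (simp add: pd_freeze[OF cF(3)] pd_coord_primitive[OF sF(3)])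
  finally show ?thesis by simp
qed simp

section \<open>The total derivative\<close>

abbreviation smooth_upto :: "nat \<Rightarrow> nat \<Rightarrow> (jpt \<Rightarrow> real) \<Rightarrow> bool" where
  "smooth_upto m k F \<equiv> smooth F \<and> depends_only (vars_upto m k) F"

lemma smooth_upto_mono: "smooth_upto m k F \<Longrightarrow> k \<le> k' \<Longrightarrow> smooth_upto m k' F"
  using depends_only_mono[OF _ vars_upto_mono[of k k' m], of F] by simp

lemma smooth_upto_pd: "smooth_upto m k F \<Longrightarrow> smooth_upto m k (pd v F)"
  by (simp add: smooth_pd depends_only_pd)

lemma pd_W_beyond_order:
  "depends_only (vars_upto m k) F \<Longrightarrow> \<not> (j < m \<and> r \<le> k) \<Longrightarrow> pd (W j r) F = (\<lambda>p. 0)"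
  by (rule pd_eq_0_if_independent) auto

lemma Dx_eq_sum:
  assumes "depends_only (vars_upto m k) F"
  shows "Dx m F = (\<lambda>p. pd X F p + (\<Sum>j<m. \<Sum>r\<le>k. p (W j (Suc r)) * pd (W j r) F p))"
proof
  fix p
  define g where "g = (\<lambda>(j, r). if j < m then p (W j (Suc r)) * pd (W j r) F p else 0)"
  have "{jr. g jr \<noteq> 0} \<subseteq> {..<m} \<times> {..k}"
  proof
    fix jr assume "jr \<in> {jr. g jr \<noteq> 0}"
    then show "jr \<in> {..<m} \<times> {..k}"
      using pd_W_beyond_order[OF assms, of "fst jr" "snd jr", THEN fun_cong, of p]
      by (cases jr) (auto simp: g_def split: if_splits)
  qed
  then have "Sum_any g = sum g ({..<m} \<times> {..k})"
    by (intro Sum_any.expand_superset) auto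
  also have "\<dots> = (\<Sum>j<m. \<Sum>r\<le>k. p (W j (Suc r)) * pd (W j r) F p)"
    by (auto simp: sum.cartesian_product g_def intro!: sum.cong)
  finally show "Dx m F p = pd X F p + (\<Sum>j<m. \<Sum>r\<le>k. p (W j (Suc r)) * pd (W j r) F p)"
    by (simp add: Dx_def g_def case_prod_beta)
qed

lemma smooth_upto_Dx:
  assumes "smooth_upto m k F"
  shows "smooth_upto m (Suc k) (Dx m F)"
proof
  have "smooth (pd v F)" for v using smooth_pd assms by blast
  then show "smooth (Dx m F)"
    unfolding Dx_eq_sum[OF assms[THEN conjunct2]]
    by (intro smooth_add smooth_sum smooth_mult smooth_coord)
  have "depends_only (vars_upto m (Suc k)) (pd v F)" for v
    using depends_only_mono[OF depends_only_pd vars_upto_mono[of k "Suc k" m]] assms by simp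
  then show "depends_only (vars_upto m (Suc k)) (Dx m F)"
    unfolding Dx_eq_sum[OF assms[THEN conjunct2]]
    by (intro depends_only_comp2[where h="(+)"] depends_only_sum depends_only_comp2[where h="(*)"]
          depends_only_coord) auto
qed

lemma smooth_upto_funpow_Dx: "smooth_upto m k F \<Longrightarrow> smooth_upto m (k + r) ((Dx m ^^ r) F)"
proof (induction r)
  case (Suc r)
  then show ?case using smooth_upto_Dx[where k="k + r" and F="(Dx m ^^ r) F"] by simp
qed simp

lemma Dx_0 [simp]: "Dx m (\<lambda>p. 0) = (\<lambda>p. 0)"
  using Dx_eq_sum[OF depends_only_const[of "vars_upto m 0" 0]] by simp

lemma funpow_Dx_0 [simp]: "(Dx m ^^ r) (\<lambda>p. 0) = (\<lambda>p. 0)"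
  by (induction r) auto

lemma Dx_add:
  assumes "smooth_upto m k F" "smooth_upto m k G"
  shows "Dx m (\<lambda>p. F p + G p) = (\<lambda>p. Dx m F p + Dx m G p)"
proof -
  have "depends_only (vars_upto m k) (\<lambda>p. F p + G p)"
    using assms by (intro depends_only_comp2[where h="(+)"]) auto
  moreover have "coordwise_C1 F" "coordwise_C1 G"
    using assms smooth_imp_coordwise_C1 by auto
  ultimately show ?thesis
    unfolding Dx_eq_sum[OF assms(1)[THEN conjunct2]] Dx_eq_sum[OF assms(2)[THEN conjunct2]]
    by (simp add: Dx_eq_sum pd_add distrib_left sum.distrib add_ac)
qed

lemma Dx_diff:
  assumes "smooth_upto m k F" "smooth_upto m k G"
  shows "Dx m (\<lambda>p. F p - G p) = (\<lambda>p. Dx m F p - Dx m G p)"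
proof -
  have "depends_only (vars_upto m k) (\<lambda>p. F p - G p)"
    using assms by (intro depends_only_comp2[where h="(-)"]) auto
  moreover have "coordwise_C1 F" "coordwise_C1 G"
    using assms smooth_imp_coordwise_C1 by auto
  ultimately show ?thesis
    unfolding Dx_eq_sum[OF assms(1)[THEN conjunct2]] Dx_eq_sum[OF assms(2)[THEN conjunct2]]
    by (simp add: Dx_eq_sum pd_diff right_diff_distrib sum_subtractf fun_eq_iff)
qed

lemma funpow_Dx_add:
  assumes "smooth_upto m k F" "smooth_upto m k G"
  shows "(Dx m ^^ r) (\<lambda>p. F p + G p) = (\<lambda>p. (Dx m ^^ r) F p + (Dx m ^^ r) G p)"
  by (induction r) (simp_all add: Dx_add[OF smooth_upto_funpow_Dx[OF assms(1)] smooth_upto_funpow_Dx[OF assms(2)]])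

lemma funpow_Dx_diff:
  assumes "smooth_upto m k F" "smooth_upto m k G"
  shows "(Dx m ^^ r) (\<lambda>p. F p - G p) = (\<lambda>p. (Dx m ^^ r) F p - (Dx m ^^ r) G p)"
  by (induction r) (simp_all add: Dx_diff[OF smooth_upto_funpow_Dx[OF assms(1)] smooth_upto_funpow_Dx[OF assms(2)]])

lemma pd_Dx:
  assumes f: "smooth_upto m k F"
  shows "pd v (Dx m F) = (\<lambda>p. Dx m (pd v F) p +
           (\<Sum>j<m. \<Sum>r\<le>k. (if v = W j (Suc r) then 1 else 0) * pd (W j r) F p))"
proof -
  have sF: "smooth F" and dF: "depends_only (vars_upto m k) F" using f by simp_all
  have sp: "smooth (pd w F)" for w using smooth_pd[OF sF] .
  have C1: "coordwise_C1 (pd w F)" "coordwise_C1 (\<lambda>p::jpt. p w)"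
    "coordwise_C1 (\<lambda>p. p (W j (Suc r)) * pd (W j r) F p)"
    "coordwise_C1 (\<lambda>p. \<Sum>r\<le>k. p (W j (Suc r)) * pd (W j r) F p)"
    "coordwise_C1 (\<lambda>p. \<Sum>j<m. \<Sum>r\<le>k. p (W j (Suc r)) * pd (W j r) F p)" for w j r
    by (intro smooth_imp_coordwise_C1 smooth_sum smooth_mult smooth_coord sp)+
  have "pd v (Dx m F) = (\<lambda>p. pd v (pd X F) p + (\<Sum>j<m. \<Sum>r\<le>k. pd v (\<lambda>p. p (W j (Suc r)) * pd (W j r) F p) p))"
    unfolding Dx_eq_sum[OF dF] by (simp add: pd_add pd_sum C1)
  also have "\<dots> = (\<lambda>p. pd X (pd v F) p + (\<Sum>j<m. \<Sum>r\<le>k. (if v = W j (Suc r) then 1 else 0) * pd (W j r) F p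
                 + p (W j (Suc r)) * pd (W j r) (pd v F) p))"
    by (simp add: pd_mult C1 pd_coord pd_commute[OF sF])
  finally show ?thesis
    by (simp add: Dx_eq_sum[OF depends_only_pd[OF dF]] sum.distrib add_ac)
qed

lemma pd_W_Dx:
  assumes f: "smooth_upto m k F" and i: "i < m"
  shows "pd (W i s) (Dx m F) = (\<lambda>p. Dx m (pd (W i s) F) p + (if 0 < s then pd (W i (s - 1)) F p else 0))"
proof -
  have "(\<Sum>j<m. \<Sum>r\<le>k. (if W i s = W j (Suc r) then 1 else 0) * pd (W j r) F p)
        = (if 0 < s then pd (W i (s - 1)) F p else 0)" for p
  proof (cases s)
    case (Suc s')
    have "(\<Sum>j<m. \<Sum>r\<le>k. (if W i s = W j (Suc r) then 1 else 0) * pd (W j r) F p)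
        = (\<Sum>j<m. if j = i then (if s' \<le> k then pd (W i s') F p else 0) else 0)"
      by (intro sum.cong) (auto simp: Suc if_distrib[of "\<lambda>x. x * _"] sum.delta cong: if_cong)
    also have "\<dots> = pd (W i s') F p"
      using i pd_W_beyond_order[of m k F i s'] f by auto
    finally show ?thesis by (simp add: Suc)
  qed simp
  then show ?thesis by (simp add: pd_Dx[OF f])
qed

lemma pd_W_funpow_Dx_beyond:
  assumes "smooth_upto m q H" "q + r < s"
  shows "pd (W i s) ((Dx m ^^ r) H) = (\<lambda>p. 0)"
  using pd_W_beyond_order[OF smooth_upto_funpow_Dx[OF assms(1), of r, THEN conjunct2], of i s] assms(2)
  by simp

lemma pd_W_funpow_Dx_leading:
  assumes f: "smooth_upto m q H" and i: "i < m"
  shows "pd (W i (q + r)) ((Dx m ^^ r) H) = pd (W i q) H"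
proof (induction r)
  case (Suc r)
  have "pd (W i (q + Suc r)) ((Dx m ^^ Suc r) H) = pd (W i (Suc (q + r))) (Dx m ((Dx m ^^ r) H))"
    by simp
  also have "\<dots> = pd (W i (q + r)) ((Dx m ^^ r) H)"
    using pd_W_funpow_Dx_beyond[OF f, of r "Suc (q + r)" i]
    by (simp add: pd_W_Dx[OF smooth_upto_funpow_Dx[OF f] i])
  finally show ?case using Suc by simp
qed simp

section \<open>The Euler operator\<close>

lemma euler_eq_sum:
  assumes "depends_only (vars_upto m k) F"
  shows "euler m j F = (\<lambda>p. \<Sum>r\<le>k. (-1)^r * (Dx m ^^ r) (pd (W j r) F) p)"
proof
  fix p
  have "{r. (-1) ^ r * (Dx m ^^ r) (pd (W j r) F) p \<noteq> (0::real)} \<subseteq> {..k}"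
  proof
    fix r assume r: "r \<in> {r. (-1) ^ r * (Dx m ^^ r) (pd (W j r) F) p \<noteq> (0::real)}"
    show "r \<in> {..k}"
    proof (rule ccontr)
      assume "r \<notin> {..k}"
      then have "pd (W j r) F = (\<lambda>p. 0)" using pd_W_beyond_order[OF assms, of j r] by simp
      then show False using r by simp
    qed
  qed
  then show "euler m j F p = (\<Sum>r\<le>k. (-1)^r * (Dx m ^^ r) (pd (W j r) F) p)"
    unfolding euler_def by (intro Sum_any.expand_superset) auto
qed

lemma euler_diff:
  assumes f: "smooth_upto m k F" and g: "smooth_upto m k G"
  shows "euler m j (\<lambda>p. F p - G p) = (\<lambda>p. euler m j F p - euler m j G p)"
proof -
  have d: "depends_only (vars_upto m k) (\<lambda>p. F p - G p)"
    using f g by (intro depends_only_comp2[where h="(-)"]) auto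
  have "(Dx m ^^ r) (pd (W j r) (\<lambda>p. F p - G p))
      = (\<lambda>p. (Dx m ^^ r) (pd (W j r) F) p - (Dx m ^^ r) (pd (W j r) G) p)" for r
    unfolding pd_diff[OF smooth_imp_coordwise_C1[OF f[THEN conjunct1]] smooth_imp_coordwise_C1[OF g[THEN conjunct1]]]
    by (rule funpow_Dx_diff[OF smooth_upto_pd[OF f] smooth_upto_pd[OF g]])
  then show ?thesis
    unfolding euler_eq_sum[OF d] euler_eq_sum[OF f[THEN conjunct2]] euler_eq_sum[OF g[THEN conjunct2]]
    by (simp add: right_diff_distrib sum_subtractf)
qed

text \<open>Total derivatives are null Lagrangians: the sum defining \<open>e\<^sup>j[Dx C]\<close> telescopes.\<close>

lemma euler_Dx:
  assumes c: "smooth_upto m k C" and j: "j < m"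
  shows "euler m j (Dx m C) = (\<lambda>p. 0)"
proof
  fix p
  define b where "b r = (Dx m ^^ Suc r) (pd (W j r) C) p" for r
  define t where "t r = (-1::real)^r * b r" for r
  have term0: "(Dx m ^^ 0) (pd (W j 0) (Dx m C)) p = b 0"
    by (simp add: pd_W_Dx[OF c j] b_def)
  have termS: "(Dx m ^^ Suc r) (pd (W j (Suc r)) (Dx m C)) p = b (Suc r) + b r" for r
  proof -
    have e: "pd (W j (Suc r)) (Dx m C) = (\<lambda>p. Dx m (pd (W j (Suc r)) C) p + pd (W j r) C p)"
      by (simp add: pd_W_Dx[OF c j])
    have "(Dx m ^^ Suc r) (pd (W j (Suc r)) (Dx m C))
       = (\<lambda>p. (Dx m ^^ Suc r) (Dx m (pd (W j (Suc r)) C)) p + (Dx m ^^ Suc r) (pd (W j r) C) p)"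
      unfolding e
      by (rule funpow_Dx_add[OF smooth_upto_Dx[OF smooth_upto_pd[OF c]] smooth_upto_mono[OF smooth_upto_pd[OF c]]])
         simp
    then show ?thesis by (simp add: b_def funpow_swap1)
  qed
  have "b (Suc k) = 0"
    using pd_W_beyond_order[OF c[THEN conjunct2], of j "Suc k"] by (simp add: b_def)
  have "euler m j (Dx m C) p = (\<Sum>r\<le>Suc k. (-1)^r * (Dx m ^^ r) (pd (W j r) (Dx m C)) p)"
    by (simp add: euler_eq_sum[OF smooth_upto_Dx[OF c, THEN conjunct2]])
  also have "\<dots> = t 0 + (\<Sum>r\<le>k. (-1)^(Suc r) * (b (Suc r) + b r))"
    by (simp only: sum.atMost_Suc_shift term0 termS) (simp add: t_def)
  also have "\<dots> = t 0 + (\<Sum>r\<le>k. t (Suc r) - t r)"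
    by (intro arg_cong2[where f="(+)"] refl sum.cong) (simp_all add: t_def algebra_simps)
  also have "\<dots> = t 0 + (\<Sum>r\<le>k. t (Suc r)) - (\<Sum>r\<le>k. t r)"
    by (simp add: sum_subtractf)
  also have "\<dots> = (\<Sum>r\<le>Suc k. t r) - (\<Sum>r\<le>k. t r)"
    by (simp only: sum.atMost_Suc_shift)
  also have "\<dots> = 0" by (simp add: t_def \<open>b (Suc k) = 0\<close>)
  finally show "euler m j (Dx m C) p = 0" .
qed

lemma pd_euler:
  assumes f: "smooth_upto m K f"
  shows "pd v (euler m j f) = (\<lambda>p. \<Sum>r\<le>K. (-1)^r * pd v ((Dx m ^^ r) (pd (W j r) f)) p)"
proof -
  have s: "smooth ((Dx m ^^ r) (pd (W j r) f))" for r
    using smooth_upto_funpow_Dx[OF smooth_upto_pd[OF f]] by blast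
  have "pd v (euler m j f) = pd v (\<lambda>p. \<Sum>r\<le>K. (-1)^r * (Dx m ^^ r) (pd (W j r) f) p)"
    by (simp only: euler_eq_sum[OF f[THEN conjunct2]])
  also have "\<dots> = (\<lambda>p. \<Sum>r\<le>K. pd v (\<lambda>p. (-1)^r * (Dx m ^^ r) (pd (W j r) f) p) p)"
    by (rule pd_sum) (auto intro: smooth_imp_coordwise_C1 smooth_scale s)
  also have "\<dots> = (\<lambda>p. \<Sum>r\<le>K. (-1)^r * pd v ((Dx m ^^ r) (pd (W j r) f)) p)"
    by (simp add: pd_scale smooth_imp_coordwise_C1[OF s])
  finally show ?thesis .
qed

section \<open>Lowering the order of a Lagrangian\<close>

lemma depends_only_lower_order:
  assumes "smooth G" "depends_only (vars_upto m (Suc k)) G"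
    and "\<forall>j<m. pd (W j (Suc k)) G = (\<lambda>p. 0)"
  shows "depends_only (vars_upto m k) G"
proof -
  have "vars_upto m (Suc k) - (\<lambda>j. W j (Suc k)) ` {..<m} = vars_upto m k"
    by (auto simp: vars_upto_def)
  moreover have "depends_only (vars_upto m (Suc k) - (\<lambda>j. W j (Suc k)) ` {..<m}) G"
    using assms(3) by (intro depends_only_Diff_if_pd_eq_0_finite assms(2) smooth_imp_coordwise_C1 assms(1)) auto
  ultimately show ?thesis by simp
qed

text \<open>The potential is built by adding one coordinate primitive per
  index; the symmetry condition keeps the derivatives already matched unchanged.\<close>

lemma exists_top_order_potential:
  assumes B: "\<forall>l<m. smooth_upto m k (B l)"
    and sym: "\<forall>i<m. \<forall>l<m. pd (W i k) (B l) = pd (W l k) (B i)"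
  shows "n \<le> m \<Longrightarrow> \<exists>C. smooth_upto m k C \<and> (\<forall>l<n. pd (W l k) C = B l)"
proof (induction n)
  case 0
  show ?case using depends_only_const by (intro exI[of _ "\<lambda>p. 0"]) simp
next
  case (Suc n)
  then obtain C where C: "smooth_upto m k C" and CB: "\<forall>l<n. pd (W l k) C = B l" by auto
  have n: "n < m" using Suc.prems by simp
  define D where "D = (\<lambda>p. B n p - pd (W n k) C p)"
  have D: "smooth_upto m k D"
    unfolding D_def using B C n
    by (auto intro!: smooth_diff smooth_pd depends_only_comp2[where h="(-)"] depends_only_pd)
  define C' where "C' = (\<lambda>p. C p + coord_primitive (W n k) D p)"
  have sJ: "smooth (coord_primitive (W n k) D)" using smooth_coord_primitive D by blast
  have C': "smooth_upto m k C'"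
    unfolding C'_def using C D n sJ
    by (auto intro!: smooth_add depends_only_comp2[where h="(+)"] depends_only_coord_primitive)
  have pdC': "pd (W l k) C' = (\<lambda>p. pd (W l k) C p + pd (W l k) (coord_primitive (W n k) D) p)" for l
    unfolding C'_def using C sJ by (intro pd_add smooth_imp_coordwise_C1) auto
  have "pd (W l k) C' = B l" if l: "l < Suc n" for l
  proof (cases "l = n")
    case True
    then show ?thesis using D by (simp add: pdC' pd_coord_primitive D_def)
  next
    case False
    then have ln: "l < n" using l by simp
    have "pd (W l k) D = (\<lambda>p. pd (W l k) (B n) p - pd (W l k) (pd (W n k) C) p)"
      unfolding D_def using B C n by (intro pd_diff smooth_imp_coordwise_C1 smooth_pd) auto
    also have "\<dots> = (\<lambda>p. 0)"
      using sym n ln CB pd_commute[of C "W l k" "W n k"] C by simp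
    finally show ?thesis using False D ln CB by (simp add: pdC' pd_coord_primitive)
  qed
  then show ?case using C' by blast
qed

lemma sum_atMost_eq_last:
  fixes n :: nat
  assumes "\<And>r. r < n \<Longrightarrow> g r = 0"
  shows "(\<Sum>r\<le>n. g r) = g n"
proof (cases n)
  case (Suc n')
  then have "(\<Sum>r\<le>n'. g r) = 0" using assms by (intro sum.neutral) auto
  then show ?thesis using Suc by simp
qed simp

lemma sum_atMost_Suc_eq_last_two:
  "(\<And>r::nat. r < n \<Longrightarrow> g r = 0) \<Longrightarrow> (\<Sum>r\<le>Suc n. g r) = g n + g (Suc n)"
  by (simp add: sum_atMost_eq_last)

lemma pd_W_euler_top:
  assumes f: "smooth_upto m K f" and l: "l < m"
  shows "pd (W l (K + K)) (euler m i f) = (\<lambda>p. (-1)^K * pd (W l K) (pd (W i K) f) p)"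
proof
  fix p
  have "pd (W l (K + K)) (euler m i f) p = (\<Sum>r\<le>K. (-1)^r * pd (W l (K + K)) ((Dx m ^^ r) (pd (W i r) f)) p)"
    by (simp add: pd_euler[OF f])
  also have "\<dots> = (-1)^K * pd (W l (K + K)) ((Dx m ^^ K) (pd (W i K) f)) p"
    by (rule sum_atMost_eq_last) (simp add: pd_W_funpow_Dx_beyond[OF smooth_upto_pd[OF f]])
  finally show "pd (W l (K + K)) (euler m i f) p = (-1)^K * pd (W l K) (pd (W i K) f) p"
    by (simp add: pd_W_funpow_Dx_leading[OF smooth_upto_pd[OF f] l])
qed

lemma pd_W_euler_subtop:
  assumes f: "smooth_upto m (Suc n) f" and l: "l < m"
    and top: "smooth_upto m n (pd (W i (Suc n)) f)"
  shows "pd (W l (Suc n + n)) (euler m i f)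
    = (\<lambda>p. (-1)^n * pd (W l (Suc n)) (pd (W i n) f) p + (-1)^Suc n * pd (W l n) (pd (W i (Suc n)) f) p)"
proof
  fix p
  have "pd (W l (Suc n + n)) (euler m i f) p
      = (\<Sum>r\<le>Suc n. (-1)^r * pd (W l (Suc n + n)) ((Dx m ^^ r) (pd (W i r) f)) p)"
    by (simp add: pd_euler[OF f])
  also have "\<dots> = (-1)^n * pd (W l (Suc n + n)) ((Dx m ^^ n) (pd (W i n) f)) p
      + (-1)^Suc n * pd (W l (Suc n + n)) ((Dx m ^^ Suc n) (pd (W i (Suc n)) f)) p"
    by (rule sum_atMost_Suc_eq_last_two) (simp add: pd_W_funpow_Dx_beyond[OF smooth_upto_pd[OF f]])
  also have "pd (W l (Suc n + n)) ((Dx m ^^ Suc n) (pd (W i (Suc n)) f)) = pd (W l n) (pd (W i (Suc n)) f)"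
    using pd_W_funpow_Dx_leading[OF top l, of "Suc n"] by (simp add: add.commute)
  also have "pd (W l (Suc n + n)) ((Dx m ^^ n) (pd (W i n) f)) = pd (W l (Suc n)) (pd (W i n) f)"
    by (rule pd_W_funpow_Dx_leading[OF smooth_upto_pd[OF f] l])
  finally show "pd (W l (Suc n + n)) (euler m i f) p
      = (-1)^n * pd (W l (Suc n)) (pd (W i n) f) p + (-1)^Suc n * pd (W l n) (pd (W i (Suc n)) f) p" .
qed

lemma top_momentum_lower_order:
  assumes e: "depends_only (vars_upto m 2) (euler m j f)"
    and f: "smooth_upto m (Suc (Suc k)) f" and j: "j < m"
  shows "smooth_upto m (Suc k) (pd (W j (Suc (Suc k))) f)"
proof -
  have "pd (W l (Suc (Suc k))) (pd (W j (Suc (Suc k))) f) = (\<lambda>p. 0)" if l: "l < m" for l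
    using pd_W_euler_top[OF f l, of j] pd_W_beyond_order[OF e, of l "Suc (Suc k) + Suc (Suc k)"]
    by (simp add: fun_eq_iff)
  then show ?thesis
    using smooth_upto_pd[OF f] depends_only_lower_order[of "pd (W j (Suc (Suc k))) f" m "Suc k"] by simp
qed

lemma top_momenta_closed:
  assumes e: "depends_only (vars_upto m 2) (euler m i f)"
    and f: "smooth_upto m (Suc (Suc k)) f" and i: "i < m" and l: "l < m"
    and top: "smooth_upto m (Suc k) (pd (W i (Suc (Suc k))) f)"
  shows "pd (W i (Suc k)) (pd (W l (Suc (Suc k))) f) = pd (W l (Suc k)) (pd (W i (Suc (Suc k))) f)"
proof -
  have "pd (W l (Suc (Suc k) + Suc k)) (euler m i f)
      = (\<lambda>p. (-1)^Suc k * pd (W l (Suc (Suc k))) (pd (W i (Suc k)) f) p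
             + (-1)^Suc (Suc k) * pd (W l (Suc k)) (pd (W i (Suc (Suc k))) f) p)"
    by (rule pd_W_euler_subtop[OF f l top])
  moreover have "pd (W l (Suc (Suc k) + Suc k)) (euler m i f) = (\<lambda>p. 0)"
    by (rule pd_W_beyond_order[OF e]) simp
  ultimately have "pd (W l (Suc (Suc k))) (pd (W i (Suc k)) f) = pd (W l (Suc k)) (pd (W i (Suc (Suc k))) f)"
    by (auto simp: fun_eq_iff)
  then show ?thesis
    using pd_commute[OF f[THEN conjunct1], of "W i (Suc k)" "W l (Suc (Suc k))"] by simp
qed

lemma lower_order_by_potential:
  assumes f: "smooth_upto m (Suc (Suc k)) f" and C: "smooth_upto m (Suc k) C"
    and CB: "\<forall>j<m. pd (W j (Suc k)) C = pd (W j (Suc (Suc k))) f"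
  shows "smooth_upto m (Suc k) (\<lambda>p. f p - Dx m C p)"
    and "\<forall>j<m. euler m j (\<lambda>p. f p - Dx m C p) = euler m j f"
proof -
  define K where "K = Suc (Suc k)"
  have fK: "smooth_upto m K f" and DC: "smooth_upto m K (Dx m C)"
    using f smooth_upto_Dx[OF C] by (simp_all add: K_def)
  then have f': "smooth_upto m K (\<lambda>p. f p - Dx m C p)"
    by (simp add: smooth_diff depends_only_comp2)
  have "pd (W j K) (\<lambda>p. f p - Dx m C p) = (\<lambda>p. 0)" if j: "j < m" for j
  proof -
    have "pd (W j K) (\<lambda>p. f p - Dx m C p) = (\<lambda>p. pd (W j K) f p - pd (W j K) (Dx m C) p)"
      using fK DC by (intro pd_diff smooth_imp_coordwise_C1) auto
    also have "pd (W j K) (Dx m C) = (\<lambda>p. Dx m (pd (W j K) C) p + pd (W j (Suc k)) C p)"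
      using pd_W_Dx[OF C j, of K] by (simp add: K_def)
    also have "pd (W j K) C = (\<lambda>p. 0)"
      using pd_W_beyond_order[OF C[THEN conjunct2], of j K] by (simp add: K_def)
    finally show ?thesis using CB j by (simp add: K_def)
  qed
  then show "smooth_upto m (Suc k) (\<lambda>p. f p - Dx m C p)"
    using f' depends_only_lower_order[of "\<lambda>p. f p - Dx m C p" m "Suc k"] by (simp add: K_def)
  show "\<forall>j<m. euler m j (\<lambda>p. f p - Dx m C p) = euler m j f"
    using euler_diff[OF fK DC] euler_Dx[OF C] by simp
qed

lemma lower_order_lagrangian:
  assumes e: "\<forall>j<m. depends_only (vars_upto m 2) (euler m j f)"
    and f: "smooth_upto m (Suc (Suc k)) f"
  shows "\<exists>f'. smooth_upto m (Suc k) f' \<and> (\<forall>j<m. euler m j f' = euler m j f)"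
proof -
  define B where "B j = pd (W j (Suc (Suc k))) f" for j
  have B: "\<forall>l<m. smooth_upto m (Suc k) (B l)"
    using top_momentum_lower_order[OF _ f] e unfolding B_def by blast
  moreover have "\<forall>i<m. \<forall>l<m. pd (W i (Suc k)) (B l) = pd (W l (Suc k)) (B i)"
    using top_momenta_closed[OF _ f] e B unfolding B_def by blast
  ultimately obtain C where C: "smooth_upto m (Suc k) C" "\<forall>l<m. pd (W l (Suc k)) C = B l"
    using exists_top_order_potential[where m=m and k="Suc k" and B=B and n=m] by auto
  show ?thesis
    using lower_order_by_potential[OF f C(1)] C(2) unfolding B_def by blast
qed

lemma exists_first_order_lagrangian:
  assumes "\<forall>j<m. depends_only (vars_upto m 2) (euler m j f)" "smooth_upto m K f"
  shows "\<exists>g. smooth_upto m 1 g \<and> (\<forall>j<m. euler m j g = euler m j f)"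
  using assms
proof (induction K arbitrary: f rule: less_induct)
  case (less K)
  show ?case
  proof (cases "K \<le> 1")
    case True
    then have "smooth_upto m 1 f" using smooth_upto_mono[OF less.prems(2)] by blast
    then show ?thesis by blast
  next
    case False
    define k where "k = K - 2"
    have K: "K = Suc (Suc k)" using False by (simp add: k_def)
    obtain f' where f': "smooth_upto m (Suc k) f'" and ef': "\<forall>j<m. euler m j f' = euler m j f"
      using lower_order_lagrangian[OF less.prems(1)] less.prems(2) K by blast
    have "\<exists>g. smooth_upto m 1 g \<and> (\<forall>j<m. euler m j g = euler m j f')"
      by (rule less.IH[of "Suc k" f']) (use K f' ef' less.prems(1) in auto)
    then show ?thesis using ef' by auto
  qed
qed

section \<open>Second-order Euler--Lagrange expressions\<close>

lemma euler_first_order: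
  assumes "depends_only (vars_upto m 1) g"
  shows "euler m j g p = pd (W j 0) g p - pd X (pd (W j 1) g) p
      - (\<Sum>j'<m. p (W j' 1) * pd (W j' 0) (pd (W j 1) g) p)
      - (\<Sum>j'<m. pd (W j' 1) (pd (W j 1) g) p * p (W j' 2))"
proof -
  have "euler m j g p = pd (W j 0) g p - Dx m (pd (W j 1) g) p"
    by (simp add: euler_eq_sum[OF assms] atMost_Suc)
  also have "Dx m (pd (W j 1) g) p = pd X (pd (W j 1) g) p
      + (\<Sum>j'<m. p (W j' 2) * pd (W j' 1) (pd (W j 1) g) p + p (W j' 1) * pd (W j' 0) (pd (W j 1) g) p)"
    by (simp add: Dx_eq_sum[OF depends_only_pd[OF assms]] atMost_Suc numeral_2_eq_2)
  finally show ?thesis by (simp add: sum.distrib algebra_simps)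
qed

theorem theorem4p2:
  fixes m :: nat and e :: "nat \<Rightarrow> jpt \<Rightarrow> real"
  assumes e_smooth: "\<forall>j<m. smooth (e j) \<and> depends_only (vars_upto m 2) (e j)"
    and exists_f: "\<exists>f. lagrange m f \<and> (\<forall>j<m. euler m j f = e j)"
  shows "(\<exists>F FF.
            (\<forall>j<m. smooth (F j) \<and> depends_only (vars_upto m 1) (F j)) \<and>
            (\<forall>j<m. \<forall>j'<m. smooth (FF j j') \<and> depends_only (vars_upto m 1) (FF j j')
                            \<and> FF j j' = FF j' j) \<and>
            (\<forall>j<m. \<forall>p. e j p = F j p - (\<Sum>j'<m. FF j j' p * p (W j' 2))))
         \<and> (\<exists>g. smooth g \<and> depends_only (vars_upto m 1) g \<and> (\<forall>j<m. euler m j g = e j))"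
proof -
  obtain f k where f: "smooth_upto m k f" and ef: "\<forall>j<m. euler m j f = e j"
    using exists_f unfolding lagrange_def by blast
  then obtain g where g: "smooth_upto m 1 g" and eg: "\<forall>j<m. euler m j g = e j"
    using exists_first_order_lagrangian[of m f k] e_smooth by auto
  define FF where "FF j j' = pd (W j' 1) (pd (W j 1) g)" for j j'
  define F where "F j p = pd (W j 0) g p - pd X (pd (W j 1) g) p
      - (\<Sum>j'<m. p (W j' 1) * pd (W j' 0) (pd (W j 1) g) p)" for j p
  have "smooth_upto m 1 (F j)" for j
    unfolding F_def using g
    by (intro conjI smooth_diff smooth_sum smooth_mult smooth_pd smooth_coord depends_only_comp2[where h="(-)"]
          depends_only_sum depends_only_comp2[where h="(*)"] depends_only_coord depends_only_pd) auto
  moreover have "smooth_upto m 1 (FF j j') \<and> FF j j' = FF j' j" for j j'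
    unfolding FF_def using g by (simp add: smooth_pd depends_only_pd pd_commute)
  moreover have "e j p = F j p - (\<Sum>j'<m. FF j j' p * p (W j' 2))" if "j < m" for j p
    using eg that euler_first_order[OF g[THEN conjunct2], of j p] by (simp add: F_def FF_def)
  ultimately show ?thesis using g eg by blast
qed

end
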